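(* Let $1/n\ll\gamma\ll\tau\ll\varepsilon\ll\alpha\ll 1$, let $k\in\mathbb{N}$, and let $G$ be a $d$-regular digraph on $n$ vertices with $d\geq(\alpha+\varepsilon)n$. If $\mathcal{P}_k=\{V_{ij}:i,j\in[k]\}$ is a $(k^2,\tau,\gamma)$-partition of $G$, then $|V_{i*}|,|V_{*i}|\geq d-\varepsilon n/2$ for all $i\in[k]$. In particular, $\mathcal{P}_k$ is a $(k^2,\alpha+\varepsilon/2,\gamma)$-partition of $G$.
   Context: Hierarchy convention: $x\ll y$ means $x\leq f(y)$ for some implicitly given non-decreasing function $f:(0,1]\to(0,1]$; the statement asserts that such functions exist, the constants being chosen from right to left. A digraph is $d$-regular if every vertex has in- and outdegree $d$. A $k^2$-partition of $V(G)$ is a family $\{V_{ij}:i,j\in[k]\}$ of pairwise disjoint (possibly empty) sets with union $V(G)$; $V_{i*}=\bigcup_j V_{ij}$, $V_{*j}=\bigcup_i V_{ij}$. $E(A,B)$ is the set of edges $ab$ with $a\in A$, $b\in B$. Bad edges: $\mathcal{B}_k(\mathcal{P}_k,G)=\bigcup_{i\neq j}E(V_{i*},V_{*j})$. A $(k^2,\tau,\gamma)$-partition of an $n$-vertex digraph is a $k^2$-partition with $|\mathcal{B}_k(\mathcal{P}_k,G)|\leq\gamma n^2$ and $|V_{i*}|,|V_{*j}|\geq\tau n$ for all $i,j\in[k]$. *)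

theory Defs
  imports Complex_Main
begin

definition digraph :: "nat set \<Rightarrow> (nat \<times> nat) set \<Rightarrow> bool" where
  "digraph V E \<longleftrightarrow> finite V \<and> E \<subseteq> V \<times> V \<and> (\<forall>v. (v, v) \<notin> E)"

definition outnbrs :: "(nat \<times> nat) set \<Rightarrow> nat \<Rightarrow> nat set" where
  "outnbrs E v = {u. (v, u) \<in> E}"

definition innbrs :: "(nat \<times> nat) set \<Rightarrow> nat \<Rightarrow> nat set" where
  "innbrs E v = {u. (u, v) \<in> E}"

definition regular_digraph :: "nat set \<Rightarrow> (nat \<times> nat) set \<Rightarrow> nat \<Rightarrow> bool" where
  "regular_digraph V E d \<longleftrightarrow> digraph V E \<and>
     (\<forall>v\<in>V. card (outnbrs E v) = d \<and> card (innbrs E v) = d)"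

definition edges_between :: "(nat \<times> nat) set \<Rightarrow> nat set \<Rightarrow> nat set \<Rightarrow> (nat \<times> nat) set" where
  "edges_between E A B = {(a, b) \<in> E. a \<in> A \<and> b \<in> B}"

definition row_part :: "nat \<Rightarrow> (nat \<Rightarrow> nat \<Rightarrow> nat set) \<Rightarrow> nat \<Rightarrow> nat set" where
  "row_part k P i = (\<Union>j\<in>{1..k}. P i j)"

definition col_part :: "nat \<Rightarrow> (nat \<Rightarrow> nat \<Rightarrow> nat set) \<Rightarrow> nat \<Rightarrow> nat set" where
  "col_part k P j = (\<Union>i\<in>{1..k}. P i j)"

definition ksq_partition :: "nat \<Rightarrow> (nat \<Rightarrow> nat \<Rightarrow> nat set) \<Rightarrow> nat set \<Rightarrow> bool" where
  "ksq_partition k P V \<longleftrightarrow>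
     (\<forall>i\<in>{1..k}. \<forall>j\<in>{1..k}. \<forall>i'\<in>{1..k}. \<forall>j'\<in>{1..k}.
        (i, j) \<noteq> (i', j') \<longrightarrow> P i j \<inter> P i' j' = {}) \<and>
     (\<Union>i\<in>{1..k}. \<Union>j\<in>{1..k}. P i j) = V"

definition bad_edges :: "nat \<Rightarrow> (nat \<Rightarrow> nat \<Rightarrow> nat set) \<Rightarrow> (nat \<times> nat) set \<Rightarrow> (nat \<times> nat) set" where
  "bad_edges k P E = (\<Union>i\<in>{1..k}. \<Union>j\<in>{1..k}.
      if i \<noteq> j then edges_between E (row_part k P i) (col_part k P j) else {})"

definition ksq_tau_gamma_partition ::
  "nat \<Rightarrow> real \<Rightarrow> real \<Rightarrow> (nat \<Rightarrow> nat \<Rightarrow> nat set) \<Rightarrow> nat set \<Rightarrow> (nat \<times> nat) set \<Rightarrow> bool" where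
  "ksq_tau_gamma_partition k \<tau> \<gamma> P V E \<longleftrightarrow>
     ksq_partition k P V \<and>
     real (card (bad_edges k P E)) \<le> \<gamma> * real (card V) ^ 2 \<and>
     (\<forall>i\<in>{1..k}. real (card (row_part k P i)) \<ge> \<tau> * real (card V) \<and>
                 real (card (col_part k P i)) \<ge> \<tau> * real (card V))"

end

theory Submission
  imports Defs
begin

text \<open>Double counting the edges leaving the row class \<open>V\<^sub>i\<^sub>*\<close>: all \<open>d |V\<^sub>i\<^sub>*|\<close> of them
  either end in \<open>V\<^sub>*\<^sub>i\<close> or are bad, so \<open>|V\<^sub>i\<^sub>*| (d - |V\<^sub>*\<^sub>i|) \<le> \<gamma> n\<^sup>2 \<le> (\<epsilon> n / 2) \<tau> n\<close>
  once \<open>\<gamma> \<le> \<epsilon> \<tau> / 2\<close>; dividing by \<open>|V\<^sub>i\<^sub>*| \<ge> \<tau> n\<close> gives \<open>|V\<^sub>*\<^sub>i| \<ge> d - \<epsilon> n / 2\<close>.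
  The edges entering \<open>V\<^sub>*\<^sub>i\<close> give the bound for \<open>|V\<^sub>i\<^sub>*|\<close> symmetrically.\<close>

lemma finite_outnbrs: "finite E \<Longrightarrow> finite (outnbrs E a)"
proof -
  assume "finite E"
  moreover have "outnbrs E a \<subseteq> snd ` E"
    unfolding outnbrs_def by (auto intro: rev_image_eqI)
  ultimately show ?thesis by (meson finite_imageI finite_subset)
qed

lemma card_edges_from:
  assumes "finite A" "finite E"
  shows "card {(a, b) \<in> E. a \<in> A} = (\<Sum>a\<in>A. card (outnbrs E a))"
proof -
  have "{(a, b) \<in> E. a \<in> A} = Sigma A (outnbrs E)"
    unfolding outnbrs_def by auto
  then show ?thesis
    using assms finite_outnbrs by (simp add: card_SigmaI)
qed

lemma card_edges_into:
  assumes "finite A" "finite E"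
  shows "card {(a, b) \<in> E. b \<in> A} = (\<Sum>b\<in>A. card (innbrs E b))"
proof -
  have "{(a, b) \<in> E. b \<in> A} = {(b, a) \<in> E\<inverse>. b \<in> A}\<inverse>" by auto
  then have "card {(a, b) \<in> E. b \<in> A} = card {(b, a) \<in> E\<inverse>. b \<in> A}"
    by (simp only: card_inverse)
  also have "\<dots> = (\<Sum>b\<in>A. card (outnbrs (E\<inverse>) b))"
    using assms by (intro card_edges_from) simp_all
  also have "outnbrs (E\<inverse>) = innbrs E"
    unfolding outnbrs_def innbrs_def by auto
  finally show ?thesis .
qed

lemma regular_digraphD:
  assumes "regular_digraph V E d"
  shows "finite V" "E \<subseteq> V \<times> V" "finite E"
  using assms finite_subset unfolding regular_digraph_def digraph_def by blast+

lemma regular_card_edges_from: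
  assumes "regular_digraph V E d" "A \<subseteq> V"
  shows "card {(a, b) \<in> E. a \<in> A} = d * card A"
proof -
  have "finite A"
    using assms regular_digraphD(1) finite_subset by blast
  then show ?thesis
    using assms card_edges_from regular_digraphD(3)
    unfolding regular_digraph_def by (simp add: subset_iff)
qed

lemma regular_card_edges_into:
  assumes "regular_digraph V E d" "A \<subseteq> V"
  shows "card {(a, b) \<in> E. b \<in> A} = d * card A"
proof -
  have "finite A"
    using assms regular_digraphD(1) finite_subset by blast
  then show ?thesis
    using assms card_edges_into regular_digraphD(3)
    unfolding regular_digraph_def by (simp add: subset_iff)
qed

lemma ksq_partition_row_part_subset:
  "ksq_partition k P V \<Longrightarrow> i \<in> {1..k} \<Longrightarrow> row_part k P i \<subseteq> V"
  unfolding ksq_partition_def row_part_def by blast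

lemma ksq_partition_col_part_subset:
  "ksq_partition k P V \<Longrightarrow> j \<in> {1..k} \<Longrightarrow> col_part k P j \<subseteq> V"
  unfolding ksq_partition_def col_part_def by blast

lemma ksq_partition_row_cover:
  "ksq_partition k P V \<Longrightarrow> v \<in> V \<Longrightarrow> \<exists>i\<in>{1..k}. v \<in> row_part k P i"
  unfolding ksq_partition_def row_part_def by blast

lemma ksq_partition_col_cover:
  "ksq_partition k P V \<Longrightarrow> v \<in> V \<Longrightarrow> \<exists>j\<in>{1..k}. v \<in> col_part k P j"
  unfolding ksq_partition_def col_part_def by blast

lemma in_bad_edgesI:
  assumes "(a, b) \<in> E" "a \<in> row_part k P i" "b \<in> col_part k P j"
    and "i \<in> {1..k}" "j \<in> {1..k}" "i \<noteq> j"
  shows "(a, b) \<in> bad_edges k P E"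
  using assms unfolding bad_edges_def edges_between_def by force

lemma edges_from_row_part_subset:
  assumes "E \<subseteq> V \<times> V" "ksq_partition k P V" "i \<in> {1..k}"
  shows "{(a, b) \<in> E. a \<in> row_part k P i}
           \<subseteq> row_part k P i \<times> col_part k P i \<union> bad_edges k P E"
proof clarify
  fix a b
  assume ab: "(a, b) \<in> E" "a \<in> row_part k P i" "(a, b) \<notin> bad_edges k P E"
  obtain j where "j \<in> {1..k}" "b \<in> col_part k P j"
    using ksq_partition_col_cover[OF assms(2)] ab(1) assms(1) by blast
  then show "b \<in> col_part k P i"
    using in_bad_edgesI[OF ab(1,2)] ab(3) assms(3) by metis
qed

lemma edges_into_col_part_subset:
  assumes "E \<subseteq> V \<times> V" "ksq_partition k P V" "i \<in> {1..k}"
  shows "{(a, b) \<in> E. b \<in> col_part k P i}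
           \<subseteq> row_part k P i \<times> col_part k P i \<union> bad_edges k P E"
proof clarify
  fix a b
  assume ab: "(a, b) \<in> E" "b \<in> col_part k P i" "(a, b) \<notin> bad_edges k P E"
  obtain j where "j \<in> {1..k}" "a \<in> row_part k P j"
    using ksq_partition_row_cover[OF assms(2)] ab(1) assms(1) by blast
  then show "a \<in> row_part k P i"
    using in_bad_edgesI[OF ab(1) _ ab(2)] ab(3) assms(3) by metis
qed

lemma bad_edges_subset: "bad_edges k P E \<subseteq> E"
  unfolding bad_edges_def edges_between_def by auto

lemma regular_card_edges_le_diagonal_block:
  assumes reg: "regular_digraph V E d" and part: "ksq_partition k P V" and i: "i \<in> {1..k}"
  shows "d * card (row_part k P i)
           \<le> card (row_part k P i) * card (col_part k P i) + card (bad_edges k P E)"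
    and "d * card (col_part k P i)
           \<le> card (row_part k P i) * card (col_part k P i) + card (bad_edges k P E)"
proof -
  let ?R = "row_part k P i" and ?C = "col_part k P i" and ?B = "bad_edges k P E"
  have sub: "?R \<subseteq> V" "?C \<subseteq> V"
    using part i ksq_partition_row_part_subset ksq_partition_col_part_subset by blast+
  have "finite (?R \<times> ?C \<union> ?B)"
    using regular_digraphD[OF reg] sub bad_edges_subset
    by (meson finite_SigmaI finite_UnI finite_subset)
  then have block: "card X \<le> card ?R * card ?C + card ?B" if "X \<subseteq> ?R \<times> ?C \<union> ?B" for X
    using card_mono[OF _ that] card_Un_le[of "?R \<times> ?C" ?B] card_cartesian_product
    by (metis le_trans)
  show "d * card ?R \<le> card ?R * card ?C + card ?B"
    using block[OF edges_from_row_part_subset[OF regular_digraphD(2)[OF reg] part i]]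
      regular_card_edges_from[OF reg sub(1)] by simp
  show "d * card ?C \<le> card ?R * card ?C + card ?B"
    using block[OF edges_into_col_part_subset[OF regular_digraphD(2)[OF reg] part i]]
      regular_card_edges_into[OF reg sub(2)] by simp
qed

lemma lower_bound_from_deficit:
  fixes R C d B \<delta> :: real
  assumes "0 < R" "d * R \<le> R * C + B" "B \<le> \<delta> * R"
  shows "d - \<delta> \<le> C"
proof -
  have "R * (d - C) \<le> R * \<delta>"
    using assms(2,3) by (simp add: algebra_simps)
  then show ?thesis
    using assms(1) by simp
qed

lemma regular_ksq_partition_part_sizes:
  fixes \<epsilon> \<tau> \<gamma> :: real
  assumes reg: "regular_digraph V E d" and n: "card V = n" "0 < n"
    and \<epsilon>: "0 < \<epsilon>" and \<tau>: "0 < \<tau>" and \<gamma>: "\<gamma> \<le> \<epsilon> * \<tau> / 2"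
    and part: "ksq_tau_gamma_partition k \<tau> \<gamma> P V E" and i: "i \<in> {1..k}"
  shows "real d - \<epsilon> * n / 2 \<le> card (row_part k P i)"
    and "real d - \<epsilon> * n / 2 \<le> card (col_part k P i)"
proof -
  let ?R = "real (card (row_part k P i))" and ?C = "real (card (col_part k P i))"
    and ?B = "real (card (bad_edges k P E))"
  have kp: "ksq_partition k P V"
    and sizes: "\<tau> * n \<le> ?R" "\<tau> * n \<le> ?C"
    using part i n(1) unfolding ksq_tau_gamma_partition_def by auto
  have "?B \<le> \<gamma> * real n ^ 2"
    using part n unfolding ksq_tau_gamma_partition_def by auto
  also have "\<gamma> * real n ^ 2 \<le> (\<epsilon> * \<tau> / 2) * real n ^ 2"
    using \<gamma> by (intro mult_right_mono) simp_all
  also have "\<dots> = (\<epsilon> * n / 2) * (\<tau> * n)"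
    by (simp add: power2_eq_square)
  finally have bad: "?B \<le> (\<epsilon> * n / 2) * (\<tau> * n)" .
  have pos: "0 < \<tau> * n" and half_nonneg: "0 \<le> \<epsilon> * n / 2"
    using \<tau> \<epsilon> n by simp_all
  have bad_R: "?B \<le> (\<epsilon> * n / 2) * ?R"
    using bad mult_left_mono[OF sizes(1) half_nonneg] by linarith
  have bad_C: "?B \<le> (\<epsilon> * n / 2) * ?C"
    using bad mult_left_mono[OF sizes(2) half_nonneg] by linarith
  have "0 < ?R" "0 < ?C"
    using pos sizes by linarith+
  moreover have "d * ?R \<le> ?R * ?C + ?B"
    using regular_card_edges_le_diagonal_block(1)[OF reg kp i]
    by (simp only: of_nat_add[symmetric] of_nat_mult[symmetric] of_nat_le_iff)
  moreover have "d * ?C \<le> ?C * ?R + ?B"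
    using regular_card_edges_le_diagonal_block(2)[OF reg kp i]
    by (simp only: mult.commute[of "card (col_part k P i)"] of_nat_add[symmetric]
        of_nat_mult[symmetric] of_nat_le_iff)
  ultimately show "real d - \<epsilon> * n / 2 \<le> ?C" "real d - \<epsilon> * n / 2 \<le> ?R"
    using lower_bound_from_deficit bad_R bad_C by blast+
qed

lemma dense_regular_ksq_partition:
  fixes \<alpha> \<epsilon> \<tau> \<gamma> :: real
  assumes reg: "regular_digraph V E d" and n: "card V = n" "0 < n"
    and \<epsilon>: "0 < \<epsilon>" and \<tau>: "0 < \<tau>" and \<gamma>: "\<gamma> \<le> \<epsilon> * \<tau> / 2"
    and dense: "(\<alpha> + \<epsilon>) * n \<le> d"
    and part: "ksq_tau_gamma_partition k \<tau> \<gamma> P V E"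
  shows "(\<forall>i\<in>{1..k}. real d - \<epsilon> * n / 2 \<le> card (row_part k P i) \<and>
                      real d - \<epsilon> * n / 2 \<le> card (col_part k P i)) \<and>
         ksq_tau_gamma_partition k (\<alpha> + \<epsilon> / 2) \<gamma> P V E"
proof -
  have sizes: "\<forall>i\<in>{1..k}. real d - \<epsilon> * n / 2 \<le> card (row_part k P i) \<and>
                             real d - \<epsilon> * n / 2 \<le> card (col_part k P i)"
    using regular_ksq_partition_part_sizes[OF reg n \<epsilon> \<tau> \<gamma> part] by blast
  moreover have "(\<alpha> + \<epsilon> / 2) * n \<le> real d - \<epsilon> * n / 2"
    using dense by (simp add: algebra_simps)
  ultimately show ?thesis
    using part n(1) unfolding ksq_tau_gamma_partition_def by force
qed

theorem proposition3p8:
  "\<exists>\<alpha>0>0. \<forall>\<alpha>. 0 < \<alpha> \<and> \<alpha> \<le> \<alpha>0 \<longrightarrow>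
   (\<exists>\<epsilon>0>0. \<forall>\<epsilon>. 0 < \<epsilon> \<and> \<epsilon> \<le> \<epsilon>0 \<longrightarrow>
   (\<exists>\<tau>0>0. \<forall>\<tau>. 0 < \<tau> \<and> \<tau> \<le> \<tau>0 \<longrightarrow>
   (\<exists>\<gamma>0>0. \<forall>\<gamma>. 0 < \<gamma> \<and> \<gamma> \<le> \<gamma>0 \<longrightarrow>
   (\<exists>n0::nat. \<forall>(n::nat) (k::nat) (d::nat) (V::nat set) (E::(nat \<times> nat) set)
        (P::nat \<Rightarrow> nat \<Rightarrow> nat set).
      n \<ge> n0 \<and> card V = n \<and> regular_digraph V E d \<and>
      real d \<ge> (\<alpha> + \<epsilon>) * real n \<and>
      ksq_tau_gamma_partition k \<tau> \<gamma> P V E \<longrightarrow>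
        (\<forall>i\<in>{1..k}. real (card (row_part k P i)) \<ge> real d - \<epsilon> * real n / 2 \<and>
                    real (card (col_part k P i)) \<ge> real d - \<epsilon> * real n / 2) \<and>
        ksq_tau_gamma_partition k (\<alpha> + \<epsilon> / 2) \<gamma> P V E))))"
  apply (rule exI[of _ 1], simp, intro allI impI)
  apply (rule exI[of _ 1], simp, intro allI impI)
  apply (rule exI[of _ 1], simp, intro allI impI)
  subgoal for \<alpha> \<epsilon> \<tau>
    \<comment> \<open>\<open>n\<^sub>0 = 1\<close> is needed: the empty digraph is \<open>d\<close>-regular for every \<open>d\<close>.\<close>
    by (intro exI[of _ "\<epsilon> * \<tau> / 2"] exI[of _ "1::nat"] conjI allI impI)
      (use dense_regular_ksq_partition in auto)
  done

end
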